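(* Let $Y$ be a random simplicial complex on $[n]=\{0,\dots,n\}$ drawn from the lower model in the medial regime, with constants $0<p\le P<1$ such that $p\le p_\sigma\le P$ for all $\sigma$. Then $Y$ is connected with probability at least $1-C\exp\!\big(-\tfrac{n^{1/2}}{2}\big)$, where $C>0$ is a constant depending on $p$ and independent of $n$.
   Context: Lower model: each non-empty proper subset $\sigma\subsetneq[n]$ is included independently with probability $p_\sigma$ into a random hypergraph $X$, and $Y$ is the largest simplicial complex contained in $X$ ($\sigma\in Y$ iff every non-empty $\tau\subseteq\sigma$ lies in $X$). Medial regime: $p,P\in(0,1)$ are independent of $n$. *)

theory Defs
  imports "HOL-Probability.Probability"
begin

definition faces :: "nat \<Rightarrow> nat set set" where
  "faces n = {\<sigma>. \<sigma> \<subseteq> {0..n} \<and> \<sigma> \<noteq> {} \<and> \<sigma> \<noteq> {0..n}}"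

definition lower_hyp_pmf :: "nat \<Rightarrow> (nat set \<Rightarrow> real) \<Rightarrow> (nat set \<Rightarrow> bool) pmf" where
  "lower_hyp_pmf n q = Pi_pmf (faces n) False (\<lambda>\<sigma>. bernoulli_pmf (q \<sigma>))"

definition hyp_of :: "nat \<Rightarrow> (nat set \<Rightarrow> bool) \<Rightarrow> nat set set" where
  "hyp_of n f = {\<sigma> \<in> faces n. f \<sigma>}"

definition largest_complex :: "nat set set \<Rightarrow> nat set set" where
  "largest_complex X = {\<sigma>. \<sigma> \<noteq> {} \<and> (\<forall>\<tau>. \<tau> \<noteq> {} \<and> \<tau> \<subseteq> \<sigma> \<longrightarrow> \<tau> \<in> X)}"

definition complex_vertices :: "nat set set \<Rightarrow> nat set" where
  "complex_vertices K = {v. {v} \<in> K}"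

definition complex_edge_rel :: "nat set set \<Rightarrow> (nat \<times> nat) set" where
  "complex_edge_rel K = {(u, v). u \<noteq> v \<and> {u, v} \<in> K}"

definition complex_connected :: "nat set set \<Rightarrow> bool" where
  "complex_connected K \<longleftrightarrow> complex_vertices K \<noteq> {} \<and>
     (\<forall>u \<in> complex_vertices K. \<forall>v \<in> complex_vertices K. (u, v) \<in> (complex_edge_rel K)\<^sup>*)"

end

theory Submission
  imports Defs "HOL-Real_Asymp.Real_Asymp"
begin

text \<open>The complex is connected as soon as it has a vertex and any two vertices u, v have a
  common neighbour w with {w}, {u, w}, {v, w} all in X.  For a fixed pair the n - 1 candidate
  triples of faces are pairwise disjoint, hence independent, so no candidate succeeds with
  probability at most (1 - p^3)^(n-1).  A union bound over the (n + 1)^2 pairs and the event that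
  there is no vertex gives failure probability at most (1 + (n + 1)^2) (1 - p^3)^(n-1), which
  decays faster than exp(-sqrt n / 2).\<close>

lemma measure_pmf_prob_pair_Times:
  "measure_pmf.prob (pair_pmf M N) (A \<times> B) = measure_pmf.prob M A * measure_pmf.prob N B"
proof -
  have "measure_pmf.prob (pair_pmf M N) (A \<times> B) =
        measure_pmf.prob (pair_pmf M N) ((A \<inter> set_pmf M) \<times> (B \<inter> set_pmf N))"
    by (subst (1 2) measure_Int_set_pmf[symmetric]) (simp add: Times_Int_Times)
  also have "\<dots> = measure_pmf.prob M (A \<inter> set_pmf M) * measure_pmf.prob N (B \<inter> set_pmf N)"
    by (rule measure_pmf_prob_product) (auto intro: countable_subset)
  finally show ?thesis
    by (simp add: measure_Int_set_pmf)
qed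

lemma prob_Pi_pmf_disjoint_blocks:
  assumes "finite W" "finite A" "\<And>w. w \<in> W \<Longrightarrow> G w \<subseteq> A" "disjoint_family_on G W"
    and "\<And>w f g. w \<in> W \<Longrightarrow> (\<forall>x\<in>G w. f x = g x) \<Longrightarrow> E w f = E w g"
  shows "measure_pmf.prob (Pi_pmf A d p) {f. \<forall>w\<in>W. E w f} =
         (\<Prod>w\<in>W. measure_pmf.prob (Pi_pmf (G w) d p) {f. E w f})"
  using assms
proof (induction W arbitrary: A rule: finite_induct)
  case empty
  then show ?case by simp
next
  case (insert w0 W A)
  define R where "R = A - G w0"
  let ?merge = "\<lambda>(f, g) x. if x \<in> G w0 then f x else g x"
  have fin: "finite (G w0)" "finite R"
    using insert.prems(1,2) finite_subset[of "G w0" A] unfolding R_def by simp_all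
  have GR: "G w \<subseteq> R" if "w \<in> W" for w
    using that insert.hyps(2) insert.prems(2) disjoint_family_onD[OF insert.prems(3), of w w0]
    unfolding R_def by auto
  have "E w (?merge (f, g)) = E w g" if "w \<in> W" for w f g
    using that GR unfolding R_def by (intro insert.prems(4)) auto
  moreover have "E w0 (?merge (f, g)) = E w0 f" for f g
    by (rule insert.prems(4)) auto
  ultimately have preimage:
    "?merge -` {f. \<forall>w\<in>insert w0 W. E w f} = {f. E w0 f} \<times> {g. \<forall>w\<in>W. E w g}"
    by auto
  have "Pi_pmf A d p = map_pmf ?merge (pair_pmf (Pi_pmf (G w0) d p) (Pi_pmf R d p))"
    using Pi_pmf_union[OF fin, of d p] insert.prems(2)[of w0] unfolding R_def
    by (simp add: Un_absorb1)
  then have "measure_pmf.prob (Pi_pmf A d p) {f. \<forall>w\<in>insert w0 W. E w f} =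
      measure_pmf.prob (pair_pmf (Pi_pmf (G w0) d p) (Pi_pmf R d p))
        ({f. E w0 f} \<times> {g. \<forall>w\<in>W. E w g})"
    by (simp add: preimage[symmetric])
  also have "\<dots> = measure_pmf.prob (Pi_pmf (G w0) d p) {f. E w0 f} *
      measure_pmf.prob (Pi_pmf R d p) {g. \<forall>w\<in>W. E w g}"
    by (rule measure_pmf_prob_pair_Times)
  also have "measure_pmf.prob (Pi_pmf R d p) {g. \<forall>w\<in>W. E w g} =
      (\<Prod>w\<in>W. measure_pmf.prob (Pi_pmf (G w) d p) {f. E w f})"
    using fin(2) GR insert.prems(3,4) by (intro insert.IH) (auto intro: disjoint_family_on_mono)
  finally show ?case
    using insert.hyps by simp
qed

lemma prob_Pi_pmf_bernoulli_all_True: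
  assumes "finite S" "\<And>s. s \<in> S \<Longrightarrow> 0 \<le> q s \<and> q s \<le> 1"
  shows "measure_pmf.prob (Pi_pmf S d (\<lambda>s. bernoulli_pmf (q s))) {f. \<forall>s\<in>S. f s} = (\<Prod>s\<in>S. q s)"
proof -
  have "{f. \<forall>s\<in>S. f s} = Pi S (\<lambda>_. {True})"
    by auto
  then show ?thesis
    using assms by (simp add: measure_Pi_pmf_Pi measure_pmf_single)
qed

lemma prob_Pi_pmf_bernoulli_no_block_complete_le:
  fixes p :: real
  assumes "finite W" "finite A" "\<And>w. w \<in> W \<Longrightarrow> G w \<subseteq> A" "disjoint_family_on G W"
    and "\<And>w. w \<in> W \<Longrightarrow> card (G w) = k"
    and "0 \<le> p" "\<And>s. s \<in> A \<Longrightarrow> p \<le> q s \<and> q s \<le> 1"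
  shows "measure_pmf.prob (Pi_pmf A d (\<lambda>s. bernoulli_pmf (q s))) {f. \<forall>w\<in>W. \<not> (\<forall>s\<in>G w. f s)}
         \<le> (1 - p ^ k) ^ card W"
proof -
  let ?M = "\<lambda>S. Pi_pmf S d (\<lambda>s. bernoulli_pmf (q s))"
  have "measure_pmf.prob (?M A) {f. \<forall>w\<in>W. \<not> (\<forall>s\<in>G w. f s)} =
      (\<Prod>w\<in>W. measure_pmf.prob (?M (G w)) {f. \<not> (\<forall>s\<in>G w. f s)})"
    using assms(1-4) by (rule prob_Pi_pmf_disjoint_blocks) auto
  also have "\<dots> \<le> (\<Prod>w\<in>W. 1 - p ^ k)"
  proof (rule prod_mono)
    fix w assume w: "w \<in> W"
    have fin: "finite (G w)"
      using w assms(2,3) finite_subset by blast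
    have q: "p \<le> q s" "q s \<le> 1" if "s \<in> G w" for s
      using that w assms(3,7) by blast+
    have all_True: "measure_pmf.prob (?M (G w)) {f. \<forall>s\<in>G w. f s} = (\<Prod>s\<in>G w. q s)"
      using q assms(6) by (intro prob_Pi_pmf_bernoulli_all_True fin) (meson order_trans)
    have prob_eq: "measure_pmf.prob (?M (G w)) {f. \<not> (\<forall>s\<in>G w. f s)} = 1 - (\<Prod>s\<in>G w. q s)"
      using measure_pmf.prob_compl[of "{f. \<forall>s\<in>G w. f s}" "?M (G w)"] all_True
      by (simp add: set_diff_eq)
    have "p ^ k = (\<Prod>s\<in>G w. p)"
      using w assms(5) by simp
    also have "\<dots> \<le> (\<Prod>s\<in>G w. q s)"
      using q assms(6) by (intro prod_mono) auto
    finally have "p ^ k \<le> (\<Prod>s\<in>G w. q s)" .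
    moreover have "(\<Prod>s\<in>G w. q s) \<le> 1"
      using q assms(6) by (intro prod_le_1) (meson order_trans)
    ultimately show "0 \<le> measure_pmf.prob (?M (G w)) {f. \<not> (\<forall>s\<in>G w. f s)} \<and>
        measure_pmf.prob (?M (G w)) {f. \<not> (\<forall>s\<in>G w. f s)} \<le> 1 - p ^ k"
      unfolding prob_eq by simp
  qed
  finally show ?thesis
    by simp
qed

lemma finite_faces: "finite (faces n)"
  by (rule finite_subset[of _ "Pow {0..n}"]) (auto simp: faces_def)

lemma faces_memberI:
  assumes "\<sigma> \<subseteq> {0..n}" "\<sigma> \<noteq> {}" "card \<sigma> \<le> n"
  shows "\<sigma> \<in> faces n"
proof -
  have "\<sigma> \<noteq> {0..n}"
    using assms(3) by auto
  then show ?thesis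
    using assms(1,2) by (simp add: faces_def)
qed

lemma singleton_in_faces: "1 \<le> n \<Longrightarrow> v \<le> n \<Longrightarrow> {v} \<in> faces n"
  by (rule faces_memberI) auto

lemma doubleton_in_faces: "2 \<le> n \<Longrightarrow> u \<le> n \<Longrightarrow> v \<le> n \<Longrightarrow> {u, v} \<in> faces n"
  by (rule faces_memberI) (auto simp: card_insert_if)

lemma singleton_in_largest_complex_iff: "{v} \<in> largest_complex X \<longleftrightarrow> {v} \<in> X"
  by (auto simp: largest_complex_def subset_singleton_iff)

lemma complex_vertices_largest_complex_iff:
  assumes "1 \<le> n"
  shows "v \<in> complex_vertices (largest_complex (hyp_of n f)) \<longleftrightarrow> v \<le> n \<and> f {v}"
proof -
  have "{v} \<in> faces n \<longleftrightarrow> v \<le> n"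
    using singleton_in_faces[OF assms] by (auto simp: faces_def)
  then show ?thesis
    by (simp add: complex_vertices_def singleton_in_largest_complex_iff hyp_of_def)
qed

lemma complex_edge_rel_largest_complexI:
  assumes "2 \<le> n" "u \<le> n" "w \<le> n" "u \<noteq> w" "f {u}" "f {w}" "f {u, w}"
  shows "(u, w) \<in> complex_edge_rel (largest_complex (hyp_of n f))"
proof -
  have "\<tau> = {u} \<or> \<tau> = {w} \<or> \<tau> = {u, w}" if "\<tau> \<noteq> {}" "\<tau> \<subseteq> {u, w}" for \<tau>
    using that by blast
  moreover have "{u} \<in> faces n" "{w} \<in> faces n" "{u, w} \<in> faces n"
    using assms(1-3) singleton_in_faces doubleton_in_faces by simp_all
  ultimately have "{u, w} \<in> largest_complex (hyp_of n f)"
    using assms(5-7) unfolding largest_complex_def hyp_of_def by blast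
  then show ?thesis
    using assms(4) by (simp add: complex_edge_rel_def)
qed

lemma complex_connected_if_common_neighbours:
  assumes "2 \<le> n" "\<exists>v\<le>n. f {v}"
    and "\<And>u v. u \<le> n \<Longrightarrow> v \<le> n \<Longrightarrow> u \<noteq> v \<Longrightarrow>
           \<exists>w\<in>{0..n} - {u, v}. f {w} \<and> f {u, w} \<and> f {v, w}"
  shows "complex_connected (largest_complex (hyp_of n f))"
proof -
  let ?K = "largest_complex (hyp_of n f)"
  have vertex_iff: "v \<in> complex_vertices ?K \<longleftrightarrow> v \<le> n \<and> f {v}" for v
    using assms(1) by (intro complex_vertices_largest_complex_iff) simp
  have "(u, v) \<in> (complex_edge_rel ?K)\<^sup>*"
    if uv: "u \<in> complex_vertices ?K" "v \<in> complex_vertices ?K" "u \<noteq> v" for u v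
  proof -
    obtain w where w: "w \<in> {0..n} - {u, v}" "f {w}" "f {u, w}" "f {v, w}"
      using assms(3)[of u v] uv vertex_iff by blast
    have "(u, w) \<in> complex_edge_rel ?K"
      using w uv vertex_iff assms(1) by (intro complex_edge_rel_largest_complexI) auto
    moreover have "(w, v) \<in> complex_edge_rel ?K"
      using w uv vertex_iff assms(1) by (intro complex_edge_rel_largest_complexI) (auto simp: insert_commute)
    ultimately show ?thesis
      by (rule converse_rtrancl_into_rtrancl[OF _ r_into_rtrancl])
  qed
  moreover have "complex_vertices ?K \<noteq> {}"
    using assms(2) vertex_iff by auto
  ultimately show ?thesis
    unfolding complex_connected_def by (metis rtrancl.rtrancl_refl)
qed

definition no_vertex_event :: "nat \<Rightarrow> (nat set \<Rightarrow> bool) set" where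
  "no_vertex_event n = {f. \<forall>v\<in>{0..n}. \<not> f {v}}"

definition no_common_neighbour_event :: "nat \<Rightarrow> nat \<Rightarrow> nat \<Rightarrow> (nat set \<Rightarrow> bool) set" where
  "no_common_neighbour_event n u v =
     {f. u \<noteq> v \<and> (\<forall>w\<in>{0..n} - {u, v}. \<not> (f {w} \<and> f {u, w} \<and> f {v, w}))}"

lemma not_connected_subset_bad_events:
  assumes "2 \<le> n"
  shows "{f. \<not> complex_connected (largest_complex (hyp_of n f))} \<subseteq>
    no_vertex_event n \<union> (\<Union>(u, v)\<in>{0..n} \<times> {0..n}. no_common_neighbour_event n u v)"
proof (rule subsetI, rule ccontr)
  fix f
  assume disconnected: "f \<in> {f. \<not> complex_connected (largest_complex (hyp_of n f))}"
    and good: "f \<notin> no_vertex_event n \<union> (\<Union>(u, v)\<in>{0..n} \<times> {0..n}. no_common_neighbour_event n u v)"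
  have "\<exists>v\<le>n. f {v}"
    using good unfolding no_vertex_event_def by auto
  moreover have "\<exists>w\<in>{0..n} - {u, v}. f {w} \<and> f {u, w} \<and> f {v, w}"
    if uv: "u \<le> n" "v \<le> n" "u \<noteq> v" for u v
  proof -
    have "f \<notin> no_common_neighbour_event n u v"
      using good uv by auto
    then show ?thesis
      using uv(3) unfolding no_common_neighbour_event_def by auto
  qed
  ultimately show False
    using disconnected complex_connected_if_common_neighbours[OF assms] by blast
qed

lemma prob_no_vertex_event_le:
  fixes p :: real
  assumes "1 \<le> n" "0 \<le> p" "\<forall>\<sigma>\<in>faces n. p \<le> q \<sigma> \<and> q \<sigma> \<le> 1"
  shows "measure_pmf.prob (lower_hyp_pmf n q) (no_vertex_event n) \<le> (1 - p) ^ (n + 1)"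
proof -
  have "measure_pmf.prob (lower_hyp_pmf n q) {f. \<forall>v\<in>{0..n}. \<not> (\<forall>\<sigma>\<in>{{v}}. f \<sigma>)}
      \<le> (1 - p ^ 1) ^ card {0..n}"
    unfolding lower_hyp_pmf_def
    using assms singleton_in_faces
    by (intro prob_Pi_pmf_bernoulli_no_block_complete_le finite_faces)
       (simp_all add: disjoint_family_on_def)
  then show ?thesis
    by (simp add: no_vertex_event_def)
qed

lemma prob_no_common_neighbour_event_le:
  fixes p :: real
  assumes "2 \<le> n" "0 \<le> p" "p \<le> 1" "\<forall>\<sigma>\<in>faces n. p \<le> q \<sigma> \<and> q \<sigma> \<le> 1"
    and "u \<le> n" "v \<le> n"
  shows "measure_pmf.prob (lower_hyp_pmf n q) (no_common_neighbour_event n u v) \<le> (1 - p ^ 3) ^ (n - 1)"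
proof (cases "u = v")
  case True
  then show ?thesis
    using assms(2,3) by (simp add: no_common_neighbour_event_def power_le_one)
next
  case False
  define G where "G w = {{w}, {u, w}, {v, w}}" for w
  have "G w \<subseteq> faces n" if "w \<in> {0..n}" for w
    using that assms(1,5,6) by (simp add: G_def singleton_in_faces doubleton_in_faces)
  moreover have "disjoint_family_on G ({0..n} - {u, v})"
    by (auto simp: disjoint_family_on_def G_def doubleton_eq_iff)
  moreover have "card (G w) = 3" if "w \<in> {0..n} - {u, v}" for w
    using that False by (auto simp: G_def card_insert_if doubleton_eq_iff)
  ultimately have "measure_pmf.prob (lower_hyp_pmf n q)
      {f. \<forall>w\<in>{0..n} - {u, v}. \<not> (\<forall>\<sigma>\<in>G w. f \<sigma>)} \<le> (1 - p ^ 3) ^ card ({0..n} - {u, v})"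
    unfolding lower_hyp_pmf_def using assms(2,4)
    by (intro prob_Pi_pmf_bernoulli_no_block_complete_le finite_faces) auto
  moreover have "card ({0..n} - {u, v}) = n - 1"
    using assms(5,6) False by (simp add: card_Diff_subset)
  ultimately show ?thesis
    using False by (simp add: G_def no_common_neighbour_event_def)
qed

lemma prob_not_connected_le:
  fixes p :: real
  assumes "0 \<le> p" "p \<le> 1" "\<forall>\<sigma>\<in>faces n. p \<le> q \<sigma> \<and> q \<sigma> \<le> 1"
  shows "measure_pmf.prob (lower_hyp_pmf n q) {f. \<not> complex_connected (largest_complex (hyp_of n f))}
         \<le> (1 + (real n + 1)^2) * (1 - p ^ 3) ^ (n - 1)"
proof (cases "2 \<le> n")
  case False
  then have "n - 1 = 0"
    by simp
  have "measure_pmf.prob (lower_hyp_pmf n q)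
      {f. \<not> complex_connected (largest_complex (hyp_of n f))} \<le> 1"
    by (rule measure_pmf.prob_le_1)
  also have "1 \<le> (1 + (real n + 1)^2) * (1 - p ^ 3) ^ (n - 1)"
    unfolding \<open>n - 1 = 0\<close> by simp
  finally show ?thesis .
next
  case True
  let ?M = "lower_hyp_pmf n q"
  let ?B = "\<lambda>(u, v). no_common_neighbour_event n u v"
  define r where "r = 1 - p ^ 3"
  have "p ^ 3 \<le> p"
    using power_decreasing[of 1 3 p] assms(1,2) by simp
  have "measure_pmf.prob ?M {f. \<not> complex_connected (largest_complex (hyp_of n f))}
      \<le> measure_pmf.prob ?M (no_vertex_event n \<union> \<Union> (?B ` ({0..n} \<times> {0..n})))"
    using not_connected_subset_bad_events[OF True] by (rule measure_pmf.finite_measure_mono) simp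
  also have "\<dots> \<le> measure_pmf.prob ?M (no_vertex_event n)
      + (\<Sum>uv\<in>{0..n} \<times> {0..n}. measure_pmf.prob ?M (?B uv))"
    by (intro order.trans[OF measure_Un_le] add_left_mono
        measure_pmf.finite_measure_subadditive_finite) auto
  also have "\<dots> \<le> r ^ (n - 1) + (\<Sum>uv\<in>{0..n} \<times> {0..n}. r ^ (n - 1))"
  proof (intro add_mono sum_mono)
    have "measure_pmf.prob ?M (no_vertex_event n) \<le> (1 - p) ^ (n + 1)"
      using True assms by (intro prob_no_vertex_event_le) auto
    also have "\<dots> \<le> r ^ (n + 1)"
      unfolding r_def using \<open>p ^ 3 \<le> p\<close> assms(2) by (intro power_mono) auto
    also have "\<dots> \<le> r ^ (n - 1)"
      unfolding r_def using \<open>p ^ 3 \<le> p\<close> assms by (intro power_decreasing) auto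
    finally show "measure_pmf.prob ?M (no_vertex_event n) \<le> r ^ (n - 1)" .
  next
    fix uv assume "uv \<in> {0..n} \<times> {0..n}"
    then obtain u v where "uv = (u, v)" "u \<le> n" "v \<le> n"
      by auto
    then show "measure_pmf.prob ?M (?B uv) \<le> r ^ (n - 1)"
      unfolding r_def using prob_no_common_neighbour_event_le[OF True assms, of u v] by simp
  qed
  also have "\<dots> = (1 + (real n + 1)^2) * (1 - p ^ 3) ^ (n - 1)"
    by (simp add: r_def algebra_simps power2_eq_square)
  finally show ?thesis .
qed

lemma poly_geometric_le_exp_sqrt:
  fixes r :: real
  assumes "0 < r" "r < 1"
  obtains K where "0 < K" "\<And>n. (1 + (real n + 1)^2) * r ^ (n - 1) \<le> K * exp (- sqrt (real n) / 2)"
proof -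
  have "(\<lambda>n. (1 + (real n + 1)^2) * r ^ (n - 1) * exp (sqrt (real n) / 2)) \<longlonglongrightarrow> 0"
    using assms by real_asymp
  then have "Bseq (\<lambda>n. (1 + (real n + 1)^2) * r ^ (n - 1) * exp (sqrt (real n) / 2))"
    by (intro convergent_imp_Bseq convergentI)
  then obtain K where "0 < K"
    and K: "\<And>n. norm ((1 + (real n + 1)^2) * r ^ (n - 1) * exp (sqrt (real n) / 2)) \<le> K"
    by (elim BseqE) blast
  have "(1 + (real n + 1)^2) * r ^ (n - 1) \<le> K * exp (- sqrt (real n) / 2)" for n
  proof -
    have "(1 + (real n + 1)^2) * r ^ (n - 1) * exp (sqrt (real n) / 2) \<le> K"
      using K[of n] assms(1) by simp
    then show ?thesis
      by (simp add: exp_minus field_simps)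
  qed
  with \<open>0 < K\<close> show thesis
    by (rule that)
qed

theorem corollary6p2:
  fixes p :: real
  assumes "0 < p" and "p < 1"
  shows "\<exists>C > 0. \<forall>(P::real) (n::nat) (q :: nat set \<Rightarrow> real).
           p \<le> P \<and> P < 1 \<and> (\<forall>\<sigma> \<in> faces n. p \<le> q \<sigma> \<and> q \<sigma> \<le> P) \<longrightarrow>
           measure_pmf.prob (lower_hyp_pmf n q)
             {f. complex_connected (largest_complex (hyp_of n f))}
           \<ge> 1 - C * exp (- sqrt (real n) / 2)"
proof -
  have "0 < p ^ 3" "p ^ 3 < 1"
    using assms by (simp_all add: power_less_one_iff)
  then obtain K where "0 < K"
    and K: "\<And>n. (1 + (real n + 1)^2) * (1 - p ^ 3) ^ (n - 1) \<le> K * exp (- sqrt (real n) / 2)"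
    using poly_geometric_le_exp_sqrt[of "1 - p ^ 3"] by auto
  have "measure_pmf.prob (lower_hyp_pmf n q) {f. complex_connected (largest_complex (hyp_of n f))}
      \<ge> 1 - K * exp (- sqrt (real n) / 2)"
    if "P < 1" "\<forall>\<sigma>\<in>faces n. p \<le> q \<sigma> \<and> q \<sigma> \<le> P" for P n q
  proof -
    let ?M = "lower_hyp_pmf n q"
    let ?connected = "{f. complex_connected (largest_complex (hyp_of n f))}"
    have "measure_pmf.prob ?M (space ?M - ?connected) \<le> K * exp (- sqrt (real n) / 2)"
      using prob_not_connected_le[of p n q] that assms K[of n] by (force simp: set_diff_eq)
    then show ?thesis
      using measure_pmf.prob_compl[of ?connected ?M] by simp
  qed
  with \<open>0 < K\<close> show ?thesis
    by blast
qed

end
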